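(* There is a constant $C > 0$ such that for every real $x \ge 2$, $$\sum_{\substack{2 \le n \le x \\ P(n)^2 \le n}} f(n) \le C\, x^{3/2} \log x.$$
   Context: For a positive integer $n$, $f(n)$ denotes the smallest positive integer $m$ such that $n$ divides $m!$. For an integer $n \ge 2$, $P(n)$ denotes the largest prime dividing $n$. $\log$ is the natural logarithm. *)

theory Defs
  imports "HOL-Analysis.Analysis" "HOL-Computational_Algebra.Primes"
begin

definition kempner :: "nat \<Rightarrow> nat" where
  "kempner n = (LEAST m. 0 < m \<and> n dvd fact m)"

text \<open>Largest prime factor of n (meaningful for n \<ge> 2).\<close>
definition largest_prime_factor :: "nat \<Rightarrow> nat" where
  "largest_prime_factor n = Max (prime_factors n)"

end

theory Submission
  imports Defs
begin

text \<open>
  Let \<open>P = P(n)\<close> and \<open>k = \<lceil>log\<^sub>2 n\<rceil>\<close>. Every prime power \<open>q\<^sup>a\<close> exactly dividing \<open>n\<close>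
  has \<open>q \<le> P\<close> and \<open>a \<le> k\<close> (as \<open>2\<^sup>a \<le> q\<^sup>a \<le> n \<le> 2\<^sup>k\<close>), and \<open>q\<^sup>k\<close> divides \<open>(k q)!\<close>, which
  divides \<open>(k P)!\<close>. Hence \<open>f(n) \<le> k P\<close>, and when \<open>P\<^sup>2 \<le> n\<close> this is at most
  \<open>\<surd>n (log\<^sub>2 n + 1)\<close>. Summing this bound over at most \<open>x\<close> integers \<open>n \<le> x\<close> gives
  \<open>x^(3/2) (log\<^sub>2 x + 1) = O(x^(3/2) log x)\<close>.
\<close>

lemma power_dvd_fact_mult:
  fixes q :: nat
  assumes "q > 0"
  shows "q ^ k dvd fact (k * q)"
proof (induction k)
  case 0
  show ?case by simp
next
  case (Suc k)
  have "q ^ Suc k = q * q ^ k" by simp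
  also have "\<dots> dvd fact q * fact (k * q)"
    using Suc.IH dvd_fact[of q q] assms by (intro mult_dvd_mono) auto
  also have "\<dots> dvd fact (q + k * q)" by (rule fact_fact_dvd_fact)
  finally show ?case by (simp add: add.commute)
qed

lemma dvd_fact_mult_if_prime_factors_le:
  fixes n k P :: nat
  assumes "n \<noteq> 0" and "n \<le> 2 ^ k" and P: "\<And>q. q \<in> prime_factors n \<Longrightarrow> q \<le> P"
  shows "n dvd fact (k * P)"
proof (rule multiplicity_le_imp_dvd[OF \<open>n \<noteq> 0\<close>])
  fix q :: nat
  assume q: "prime q"
  show "multiplicity q n \<le> multiplicity q (fact (k * P))"
  proof (cases "q dvd n")
    case False
    then show ?thesis by (simp add: not_dvd_imp_multiplicity_0)
  next
    case True
    have "q ^ multiplicity q n \<le> q ^ k"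
    proof -
      have "q ^ multiplicity q n \<le> n"
        using multiplicity_dvd[of q n] \<open>n \<noteq> 0\<close> by (simp add: dvd_imp_le)
      also have "\<dots> \<le> 2 ^ k" by (rule assms(2))
      also have "\<dots> \<le> q ^ k" using prime_ge_2_nat[OF q] by (simp add: power_mono)
      finally show ?thesis .
    qed
    then have mult_le_k: "multiplicity q n \<le> k"
      using power_le_imp_le_exp prime_gt_1_nat[OF q] by blast
    have "q ^ k dvd fact (k * q)"
      using power_dvd_fact_mult prime_gt_0_nat[OF q] by blast
    also have "fact (k * q) dvd (fact (k * P) :: nat)"
      using P[of q] True q \<open>n \<noteq> 0\<close> by (intro fact_dvd) (simp add: prime_factors_dvd)
    finally have "k \<le> multiplicity q (fact (k * P))"
      using q by (intro multiplicity_geI) (auto simp: prime_gt_1_nat)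
    with mult_le_k show ?thesis by simp
  qed
qed

lemma kempner_le:
  assumes "m > 0" and "n dvd fact m"
  shows "kempner n \<le> m"
  unfolding kempner_def by (rule Least_le) (use assms in simp)

lemma largest_prime_factor_in_prime_factors:
  assumes "n \<ge> 2"
  shows "largest_prime_factor n \<in> prime_factors n"
proof -
  obtain p :: nat where "prime p" "p dvd n" using prime_factor_nat[of n] assms by auto
  then have "prime_factors n \<noteq> {}" using assms by (auto simp: prime_factors_dvd)
  then show ?thesis unfolding largest_prime_factor_def by simp
qed

lemma le_largest_prime_factor:
  "q \<in> prime_factors n \<Longrightarrow> q \<le> largest_prime_factor n"
  unfolding largest_prime_factor_def by simp

lemma kempner_le_ceiling_log_mult_largest_prime_factor:
  assumes "n \<ge> 2"
  shows "kempner n \<le> nat \<lceil>log 2 n\<rceil> * largest_prime_factor n"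
proof (rule kempner_le)
  define k where "k = nat \<lceil>log 2 n\<rceil>"
  have "log 2 n \<ge> 1" using assms by simp
  then have "k > 0" unfolding k_def by linarith
  moreover have "largest_prime_factor n > 0"
    using largest_prime_factor_in_prime_factors[OF assms] by (auto intro: prime_gt_0_nat)
  ultimately show "0 < k * largest_prime_factor n" by simp
  have "real n = 2 powr log 2 n" using assms by simp
  also have "\<dots> \<le> 2 powr k" unfolding k_def by (rule powr_mono) (use \<open>log 2 n \<ge> 1\<close> in auto)
  also have "\<dots> = real (2 ^ k)" by (simp add: powr_realpow)
  finally have "n \<le> 2 ^ k" by linarith
  then show "n dvd fact (k * largest_prime_factor n)"
    using assms le_largest_prime_factor by (intro dvd_fact_mult_if_prime_factors_le) auto
qed

lemma kempner_le_sqrt_mult_log: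
  assumes "n \<ge> 2" and "(largest_prime_factor n)^2 \<le> n"
  shows "real (kempner n) \<le> sqrt n * (log 2 n + 1)"
proof -
  have "log 2 n \<ge> 1" using assms(1) by simp
  have "real (kempner n) \<le> real (nat \<lceil>log 2 n\<rceil>) * real (largest_prime_factor n)"
    using kempner_le_ceiling_log_mult_largest_prime_factor[OF assms(1)] of_nat_mono by fastforce
  also have "\<dots> \<le> (log 2 n + 1) * sqrt n"
  proof (rule mult_mono)
    show "real (nat \<lceil>log 2 n\<rceil>) \<le> log 2 n + 1" using \<open>log 2 n \<ge> 1\<close> by linarith
    have "real (largest_prime_factor n) ^ 2 \<le> real n"
      using assms(2) by (metis of_nat_le_iff of_nat_power)
    then show "real (largest_prime_factor n) \<le> sqrt n" by (rule real_le_rsqrt)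
  qed (use \<open>log 2 n \<ge> 1\<close> in auto)
  finally show ?thesis by (simp only: mult.commute)
qed

lemma card_le_real_if_subset:
  assumes "x \<ge> 0" and "S \<subseteq> {n::nat. 1 \<le> n \<and> real n \<le> x}"
  shows "real (card S) \<le> x"
proof -
  have "S \<subseteq> {1..nat \<lfloor>x\<rfloor>}" using assms by (auto simp: le_nat_floor)
  then have "card S \<le> nat \<lfloor>x\<rfloor>" using card_mono[of "{1..nat \<lfloor>x\<rfloor>}" S] by simp
  then show ?thesis using assms(1) by linarith
qed

lemma powr_three_halves:
  assumes "x \<ge> 0"
  shows "x powr (3/2) = x * sqrt x"
proof -
  have "x powr (3/2) = x powr (1 + 1/2)" by simp
  also have "\<dots> = x powr 1 * x powr (1/2)" by (rule powr_add)
  finally show ?thesis using assms by (cases "x = 0") (simp_all add: powr_half_sqrt)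
qed

lemma log2_plus_one_le_ln: "x \<ge> 2 \<Longrightarrow> log 2 x + 1 \<le> 2 / ln 2 * ln x"
  unfolding log_def by (simp add: field_simps)

theorem mainTheorem5:
  "\<exists>C::real. C > 0 \<and> (\<forall>x::real. x \<ge> 2 \<longrightarrow>
     (\<Sum>n\<in>{n::nat. 2 \<le> n \<and> real n \<le> x \<and> (largest_prime_factor n)^2 \<le> n}.
        real (kempner n)) \<le> C * x powr (3/2) * ln x)"
proof (intro exI[of _ "2 / ln 2"] conjI allI impI)
  fix x :: real
  assume "x \<ge> 2"
  define S where "S = {n::nat. 2 \<le> n \<and> real n \<le> x \<and> (largest_prime_factor n)^2 \<le> n}"
  define B where "B = sqrt x * (log 2 x + 1)"
  have "real (card S) \<le> x"
    using \<open>x \<ge> 2\<close> by (intro card_le_real_if_subset) (auto simp: S_def)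
  have "(\<Sum>n\<in>S. real (kempner n)) \<le> real (card S) * B"
  proof (rule sum_bounded_above)
    fix n assume "n \<in> S"
    then have "n \<ge> 2" and "real n \<le> x" and "(largest_prime_factor n)^2 \<le> n"
      unfolding S_def by auto
    then have "real (kempner n) \<le> sqrt n * (log 2 n + 1)"
      by (intro kempner_le_sqrt_mult_log)
    also have "\<dots> \<le> B"
      unfolding B_def using \<open>n \<ge> 2\<close> \<open>real n \<le> x\<close>
      by (intro mult_mono add_right_mono log_le_cancel_iff[THEN iffD2]) auto
    finally show "real (kempner n) \<le> B" .
  qed
  also have "\<dots> \<le> x * B" using \<open>real (card S) \<le> x\<close> \<open>x \<ge> 2\<close> unfolding B_def
    by (intro mult_right_mono) auto
  also have "\<dots> = x * sqrt x * (log 2 x + 1)" by (simp add: B_def)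
  also have "\<dots> \<le> x * sqrt x * (2 / ln 2 * ln x)"
    using log2_plus_one_le_ln[OF \<open>x \<ge> 2\<close>] \<open>x \<ge> 2\<close> by (intro mult_left_mono) auto
  also have "\<dots> = 2 / ln 2 * x powr (3/2) * ln x"
    using \<open>x \<ge> 2\<close> by (simp add: powr_three_halves)
  finally show "(\<Sum>n\<in>S. real (kempner n)) \<le> 2 / ln 2 * x powr (3/2) * ln x" .
qed simp

end
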